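(* Let $T:\mathbb{R}^d\to\mathbb{R}^d$ be nonexpansive with respect to a norm $\|\cdot\|$ on $\mathbb{R}^d$, with $\operatorname{Fix}T\neq\emptyset$. Let $(\beta_n)_{n\ge1}\subseteq(0,1)$ be nondecreasing with $\lim_n\beta_n=1$, let $x^0\in\mathbb{R}^d$, and let $(x^n)_{n\ge1}$ be generated by $x^n=(1-\beta_n)x^0+\beta_n(Tx^{n-1}+U_n)$, $n\ge1$, where $(U_n)$ are random vectors with $\mathbb{E}(U_n)=0$ and $\sigma_n:=\mathbb{E}(\|U_n\|)<\infty$. Then: (i) If there is $M>0$ with $\|Tx\|\le M$ for all $x\in\mathbb{R}^d$, then $\sup_{n\ge0}\mathbb{E}(\|Tx^n-x^0\|)\le M+\|x^0\|$. (ii) If $S:=\sup_{n\ge1}\sum_{i=1}^n B_i^n\sigma_i<+\infty$, then $\sup_{n\ge0}\mathbb{E}(\|Tx^n-x^0\|)\le 2\operatorname{dist}(x^0,\operatorname{Fix}T)+S$. In particular, if $\sum_n\sigma_n<+\infty$ then $\sup_{n\ge0}\mathbb{E}(\|Tx^n-x^0\|)<+\infty$.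
   Context: Notation: $B_i^n:=\prod_{j=i}^n\beta_j$ (with $B_i^n=1$ if $i>n$). $\operatorname{dist}(x^0,\operatorname{Fix}T)=\inf_{x^*\in\operatorname{Fix}T}\|x^0-x^*\|$. *)

theory Defs
  imports "HOL-Probability.Probability"
begin

definition is_norm :: "('a::real_vector \<Rightarrow> real) \<Rightarrow> bool" where
  "is_norm N \<longleftrightarrow> (\<forall>x. N x = 0 \<longleftrightarrow> x = 0) \<and>
     (\<forall>a x. N (a *\<^sub>R x) = \<bar>a\<bar> * N x) \<and>
     (\<forall>x y. N (x + y) \<le> N x + N y)"

definition nonexpansive_wrt :: "('a::real_vector \<Rightarrow> real) \<Rightarrow> ('a \<Rightarrow> 'a) \<Rightarrow> bool" where
  "nonexpansive_wrt N T \<longleftrightarrow> (\<forall>x y. N (T x - T y) \<le> N (x - y))"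

definition Fix :: "('a \<Rightarrow> 'a) \<Rightarrow> 'a set" where
  "Fix T = {x. T x = x}"

definition distN :: "('a::real_vector \<Rightarrow> real) \<Rightarrow> 'a \<Rightarrow> 'a set \<Rightarrow> real" where
  "distN N x A = (INF p\<in>A. N (x - p))"

definition Bprod :: "(nat \<Rightarrow> real) \<Rightarrow> nat \<Rightarrow> nat \<Rightarrow> real" where
  "Bprod \<beta> i n = (\<Prod>j=i..n. \<beta> j)"

primrec halpern_iter ::
  "('a::real_vector \<Rightarrow> 'a) \<Rightarrow> (nat \<Rightarrow> real) \<Rightarrow> (nat \<Rightarrow> 'b \<Rightarrow> 'a) \<Rightarrow> 'a \<Rightarrow> nat \<Rightarrow> 'b \<Rightarrow> 'a" where
  "halpern_iter T \<beta> U x0 0 \<omega> = x0"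
| "halpern_iter T \<beta> U x0 (Suc n) \<omega> =
     (1 - \<beta> (Suc n)) *\<^sub>R x0 + \<beta> (Suc n) *\<^sub>R (T (halpern_iter T \<beta> U x0 n \<omega>) + U (Suc n) \<omega>)"

end

theory Submission
  imports Defs
begin

text \<open>
  Fix a fixed point \<open>p\<close> of \<open>T\<close>. Since \<open>x\<^sup>n - p = (1 - \<beta>\<^sub>n)(x\<^sup>0 - p) + \<beta>\<^sub>n(T x\<^sup>n\<^sup>-\<^sup>1 - T p) + \<beta>\<^sub>n U\<^sub>n\<close>,
  nonexpansiveness and induction give the pathwise bound
  \<open>\<parallel>x\<^sup>n - p\<parallel> \<le> \<parallel>x\<^sup>0 - p\<parallel> + \<Sum>\<^sub>i B\<^sub>i\<^sup>n \<parallel>U\<^sub>i\<parallel>\<close>, hence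
  \<open>\<parallel>T x\<^sup>n - x\<^sup>0\<parallel> \<le> \<parallel>x\<^sup>n - p\<parallel> + \<parallel>p - x\<^sup>0\<parallel> \<le> 2\<parallel>x\<^sup>0 - p\<parallel> + \<Sum>\<^sub>i B\<^sub>i\<^sup>n \<parallel>U\<^sub>i\<parallel>\<close>.
  Taking expectations and the infimum over \<open>p\<close> gives (ii); since \<open>B\<^sub>i\<^sup>n \<le> 1\<close>, the weighted
  sums are bounded by \<open>\<Sum>\<^sub>n \<sigma>\<^sub>n\<close>, which gives the final claim. Part (i) is the triangle
  inequality \<open>\<parallel>T x\<^sup>n - x\<^sup>0\<parallel> \<le> \<parallel>T x\<^sup>n\<parallel> + \<parallel>x\<^sup>0\<parallel>\<close>.
\<close>

lemma is_norm_triangle: "is_norm N \<Longrightarrow> N (x + y) \<le> N x + N y"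
  unfolding is_norm_def by blast

lemma is_norm_scaleR: "is_norm N \<Longrightarrow> 0 \<le> a \<Longrightarrow> N (a *\<^sub>R x) = a * N x"
  unfolding is_norm_def by simp

lemma is_norm_minus: "is_norm N \<Longrightarrow> N (- x) = N x"
  unfolding is_norm_def by (metis abs_minus_cancel abs_one mult_1 scaleR_minus1_left)

lemma is_norm_commute: "is_norm N \<Longrightarrow> N (x - y) = N (y - x)"
  using is_norm_minus[of N "x - y"] by simp

lemma is_norm_triangle_diff: "is_norm N \<Longrightarrow> N (x - z) \<le> N (x - y) + N (y - z)"
  using is_norm_triangle[of N "x - y" "y - z"] by simp

lemma is_norm_nonneg:
  assumes "is_norm N"
  shows "0 \<le> N x"
proof -
  have "N 0 = 0" using assms unfolding is_norm_def by blast
  then show ?thesis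
    using is_norm_triangle[OF assms, of x "- x"] is_norm_minus[OF assms, of x] by simp
qed

lemma Bprod_Suc: "i \<le> Suc n \<Longrightarrow> Bprod \<beta> i (Suc n) = Bprod \<beta> i n * \<beta> (Suc n)"
  unfolding Bprod_def by (simp add: prod.nat_ivl_Suc')

lemma Bprod_bounds:
  assumes "\<forall>n\<ge>1. 0 \<le> \<beta> n \<and> \<beta> n \<le> 1" and "1 \<le> i"
  shows "0 \<le> Bprod \<beta> i n" and "Bprod \<beta> i n \<le> 1"
  unfolding Bprod_def using assms by (auto intro!: prod_nonneg prod_le_1)

lemma Bprod_weighted_sum_Suc:
  "(\<Sum>i=1..Suc n. Bprod \<beta> i (Suc n) * a i)
     = \<beta> (Suc n) * ((\<Sum>i=1..n. Bprod \<beta> i n * a i) + a (Suc n))"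
proof -
  have "(\<Sum>i=1..n. Bprod \<beta> i (Suc n) * a i) = \<beta> (Suc n) * (\<Sum>i=1..n. Bprod \<beta> i n * a i)"
    unfolding sum_distrib_left by (rule sum.cong) (auto simp: Bprod_Suc)
  moreover have "Bprod \<beta> (Suc n) (Suc n) = \<beta> (Suc n)"
    by (simp add: Bprod_def)
  ultimately show ?thesis
    by (simp add: algebra_simps)
qed

lemma Bprod_weighted_sum_nonneg:
  assumes "\<forall>n\<ge>1. 0 \<le> \<beta> n \<and> \<beta> n \<le> 1" and "\<forall>i\<ge>1. 0 \<le> a i"
  shows "0 \<le> (\<Sum>i=1..n. Bprod \<beta> i n * a i)"
  using assms Bprod_bounds(1)[OF assms(1)] by (intro sum_nonneg mult_nonneg_nonneg) auto

lemma Bprod_weighted_sum_le_suminf: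
  assumes "\<forall>n\<ge>1. 0 \<le> \<beta> n \<and> \<beta> n \<le> 1" and "\<forall>i\<ge>1. 0 \<le> a i"
    and "summable (\<lambda>n. a (Suc n))"
  shows "(\<Sum>i=1..n. Bprod \<beta> i n * a i) \<le> (\<Sum>n. a (Suc n))"
proof -
  have "(\<Sum>i=1..n. Bprod \<beta> i n * a i) \<le> (\<Sum>i=1..n. a i)"
    using assms(2) Bprod_bounds[OF assms(1)]
    by (intro sum_mono) (auto intro: mult_left_le_one_le)
  also have "\<dots> = (\<Sum>i<n. a (Suc i))"
    by (simp add: sum.atLeast1_atMost_eq)
  also have "\<dots> \<le> (\<Sum>n. a (Suc n))"
    using assms(2,3) by (intro sum_le_suminf) auto
  finally show ?thesis .
qed

lemma halpern_iter_dist_fixpoint_le: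
  fixes N :: "'a::real_vector \<Rightarrow> real"
  assumes norm: "is_norm N" and nonexp: "nonexpansive_wrt N T" and fixed: "T p = p"
    and beta: "\<forall>n\<ge>1. 0 \<le> \<beta> n \<and> \<beta> n \<le> 1"
  shows "N (halpern_iter T \<beta> U x0 n \<omega> - p) \<le> N (x0 - p) + (\<Sum>i=1..n. Bprod \<beta> i n * N (U i \<omega>))"
proof (induction n)
  case 0
  then show ?case by simp
next
  case (Suc n)
  define b where "b = \<beta> (Suc n)"
  define y where "y = halpern_iter T \<beta> U x0 n \<omega>"
  have b: "0 \<le> b" "b \<le> 1"
    using beta by (auto simp: b_def)
  have "halpern_iter T \<beta> U x0 (Suc n) \<omega> - p
      = ((1 - b) *\<^sub>R (x0 - p) + b *\<^sub>R (T y - T p)) + b *\<^sub>R U (Suc n) \<omega>"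
    using fixed by (simp add: y_def b_def algebra_simps)
  then have "N (halpern_iter T \<beta> U x0 (Suc n) \<omega> - p)
      \<le> N ((1 - b) *\<^sub>R (x0 - p)) + N (b *\<^sub>R (T y - T p)) + N (b *\<^sub>R U (Suc n) \<omega>)"
    by (metis add_right_mono is_norm_triangle[OF norm] order_trans)
  also have "\<dots> = (1 - b) * N (x0 - p) + b * N (T y - T p) + b * N (U (Suc n) \<omega>)"
    using b by (simp add: is_norm_scaleR[OF norm])
  also have "\<dots> \<le> (1 - b) * N (x0 - p) + b * N (y - p) + b * N (U (Suc n) \<omega>)"
    using nonexp b unfolding nonexpansive_wrt_def by (simp add: mult_left_mono)
  also have "\<dots> \<le> (1 - b) * N (x0 - p)
      + b * (N (x0 - p) + (\<Sum>i=1..n. Bprod \<beta> i n * N (U i \<omega>))) + b * N (U (Suc n) \<omega>)"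
    using Suc.IH b by (simp add: y_def mult_left_mono)
  also have "\<dots> = N (x0 - p) + (\<Sum>i=1..Suc n. Bprod \<beta> i (Suc n) * N (U i \<omega>))"
    by (subst Bprod_weighted_sum_Suc) (simp add: b_def algebra_simps)
  finally show ?case .
qed

lemma halpern_image_dist_start_le:
  fixes N :: "'a::real_vector \<Rightarrow> real"
  assumes norm: "is_norm N" and nonexp: "nonexpansive_wrt N T" and fixed: "T p = p"
    and beta: "\<forall>n\<ge>1. 0 \<le> \<beta> n \<and> \<beta> n \<le> 1"
  shows "N (T (halpern_iter T \<beta> U x0 n \<omega>) - x0)
           \<le> 2 * N (x0 - p) + (\<Sum>i=1..n. Bprod \<beta> i n * N (U i \<omega>))"
proof -
  let ?x = "halpern_iter T \<beta> U x0 n \<omega>"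
  have "N (T ?x - x0) \<le> N (T ?x - T p) + N (p - x0)"
    using is_norm_triangle_diff[OF norm] fixed by metis
  also have "\<dots> \<le> N (?x - p) + N (x0 - p)"
    using nonexp is_norm_commute[OF norm, of p x0] unfolding nonexpansive_wrt_def
    by (metis add_right_mono)
  finally show ?thesis
    using halpern_iter_dist_fixpoint_le[OF norm nonexp fixed beta, of U x0 n \<omega>] by simp
qed

lemma nn_integral_halpern_le:
  fixes N :: "'a::real_vector \<Rightarrow> real" and M :: "'s measure"
  assumes norm: "is_norm N" and nonexp: "nonexpansive_wrt N T" and fixed: "T p = p"
    and beta: "\<forall>n\<ge>1. 0 \<le> \<beta> n \<and> \<beta> n \<le> 1"
    and prob: "prob_space M"
    and U_normint: "\<forall>n\<ge>1. integrable M (\<lambda>\<omega>. N (U n \<omega>))"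
    and sigma_def: "\<forall>n\<ge>1. \<sigma> n = prob_space.expectation M (\<lambda>\<omega>. N (U n \<omega>))"
  shows "(\<integral>\<^sup>+ \<omega>. ennreal (N (T (halpern_iter T \<beta> U x0 n \<omega>) - x0)) \<partial>M)
           \<le> ennreal (2 * N (x0 - p) + (\<Sum>i=1..n. Bprod \<beta> i n * \<sigma> i))"
proof -
  interpret prob_space M by (rule prob)
  define W where "W \<omega> = (\<Sum>i=1..n. Bprod \<beta> i n * N (U i \<omega>))" for \<omega>
  have W_int: "integrable M W"
    unfolding W_def using U_normint by (intro Bochner_Integration.integrable_sum integrable_mult_right) auto
  have W_nonneg: "0 \<le> W \<omega>" for \<omega>
    unfolding W_def using beta is_norm_nonneg[OF norm] by (intro Bprod_weighted_sum_nonneg) auto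
  have "(\<integral>\<^sup>+ \<omega>. ennreal (N (T (halpern_iter T \<beta> U x0 n \<omega>) - x0)) \<partial>M)
      \<le> (\<integral>\<^sup>+ \<omega>. ennreal (2 * N (x0 - p) + W \<omega>) \<partial>M)"
    unfolding W_def
    by (intro nn_integral_mono ennreal_leI halpern_image_dist_start_le[OF norm nonexp fixed beta])
  also have "\<dots> = ennreal (\<integral>\<omega>. 2 * N (x0 - p) + W \<omega> \<partial>M)"
    using W_int W_nonneg is_norm_nonneg[OF norm] by (intro nn_integral_eq_integral) auto
  also have "(\<integral>\<omega>. 2 * N (x0 - p) + W \<omega> \<partial>M) = 2 * N (x0 - p) + (\<integral>\<omega>. W \<omega> \<partial>M)"
    using W_int by (simp add: prob_space)
  also have "(\<integral>\<omega>. W \<omega> \<partial>M) = (\<Sum>i=1..n. Bprod \<beta> i n * \<sigma> i)"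
    unfolding W_def using U_normint sigma_def by (subst Bochner_Integration.integral_sum) auto
  finally show ?thesis .
qed

lemma ennreal_le_distN:
  assumes norm: "is_norm N" and "A \<noteq> {}" and "0 \<le> S"
    and bound: "\<And>p. p \<in> A \<Longrightarrow> X \<le> ennreal (2 * N (x - p) + S)"
  shows "X \<le> ennreal (2 * distN N x A + S)"
proof -
  obtain p0 where "p0 \<in> A" using \<open>A \<noteq> {}\<close> by blast
  then obtain r where r: "X = ennreal r" "0 \<le> r"
    using bound[of p0] by (cases X) (auto simp: top_unique)
  have "r \<le> 2 * N (x - p) + S" if "p \<in> A" for p
  proof -
    have "0 \<le> 2 * N (x - p) + S"
      using is_norm_nonneg[OF norm, of "x - p"] \<open>0 \<le> S\<close> by simp
    then show ?thesis
      using bound[OF that] r(1) by (metis ennreal_le_iff)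
  qed
  then have "(r - S) / 2 \<le> distN N x A"
    unfolding distN_def using \<open>A \<noteq> {}\<close> by (intro cINF_greatest) (auto simp: field_simps)
  then show ?thesis
    using r by (simp add: ennreal_leI)
qed

lemma SUP_nn_integral_halpern_le_bound:
  fixes N :: "'a::real_vector \<Rightarrow> real" and M :: "'s measure"
  assumes norm: "is_norm N" and prob: "prob_space M" and bounded: "\<forall>x. N (T x) \<le> C"
  shows "(SUP n. \<integral>\<^sup>+ \<omega>. ennreal (N (T (halpern_iter T \<beta> U x0 n \<omega>) - x0)) \<partial>M)
           \<le> ennreal (C + N x0)"
proof (rule SUP_least)
  fix n
  have "N (T y - x0) \<le> C + N x0" for y
    using is_norm_triangle_diff[OF norm, of "T y" x0 0] is_norm_minus[OF norm, of x0] bounded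
    by (metis add_right_mono diff_0 diff_zero order_trans)
  then have "(\<integral>\<^sup>+ \<omega>. ennreal (N (T (halpern_iter T \<beta> U x0 n \<omega>) - x0)) \<partial>M)
      \<le> (\<integral>\<^sup>+ \<omega>. ennreal (C + N x0) \<partial>M)"
    by (intro nn_integral_mono ennreal_leI)
  also have "\<dots> = ennreal (C + N x0)"
    using prob_space.emeasure_space_1[OF prob] by simp
  finally show "(\<integral>\<^sup>+ \<omega>. ennreal (N (T (halpern_iter T \<beta> U x0 n \<omega>) - x0)) \<partial>M) \<le> ennreal (C + N x0)" .
qed

lemma SUP_nn_integral_halpern_le_distN:
  fixes N :: "'a::real_vector \<Rightarrow> real" and M :: "'s measure"
  assumes norm: "is_norm N" and nonexp: "nonexpansive_wrt N T" and fix_ne: "Fix T \<noteq> {}"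
    and beta: "\<forall>n\<ge>1. 0 \<le> \<beta> n \<and> \<beta> n \<le> 1"
    and prob: "prob_space M"
    and U_normint: "\<forall>n\<ge>1. integrable M (\<lambda>\<omega>. N (U n \<omega>))"
    and sigma_def: "\<forall>n\<ge>1. \<sigma> n = prob_space.expectation M (\<lambda>\<omega>. N (U n \<omega>))"
    and bdd: "bdd_above ((\<lambda>n. \<Sum>i=1..n. Bprod \<beta> i n * \<sigma> i) ` {1..})"
  shows "(SUP n. \<integral>\<^sup>+ \<omega>. ennreal (N (T (halpern_iter T \<beta> U x0 n \<omega>) - x0)) \<partial>M)
           \<le> ennreal (2 * distN N x0 (Fix T) + (SUP n\<in>{1..}. \<Sum>i=1..n. Bprod \<beta> i n * \<sigma> i))"
proof (rule SUP_least)
  fix n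
  define s where "s n = (\<Sum>i=1..n. Bprod \<beta> i n * \<sigma> i)" for n
  define S where "S = (SUP n\<in>{1..}. s n)"
  have "0 \<le> \<sigma> i" if "1 \<le> i" for i
    using sigma_def that is_norm_nonneg[OF norm] by (simp add: integral_nonneg_AE)
  then have s_nonneg: "0 \<le> s n" for n
    unfolding s_def using beta by (intro Bprod_weighted_sum_nonneg) auto
  have s_le_S: "s n \<le> S" if "1 \<le> n" for n
    unfolding S_def using bdd that by (intro cSUP_upper) (auto simp: s_def)
  have S_nonneg: "0 \<le> S"
    using s_le_S[of 1] s_nonneg[of 1] by simp
  have s_n_le_S: "s n \<le> S"
    using s_le_S[of n] S_nonneg by (cases "n = 0") (auto simp: s_def)
  show "(\<integral>\<^sup>+ \<omega>. ennreal (N (T (halpern_iter T \<beta> U x0 n \<omega>) - x0)) \<partial>M)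
      \<le> ennreal (2 * distN N x0 (Fix T) + S)"
  proof (rule ennreal_le_distN[OF norm fix_ne S_nonneg])
    fix p assume "p \<in> Fix T"
    then have "(\<integral>\<^sup>+ \<omega>. ennreal (N (T (halpern_iter T \<beta> U x0 n \<omega>) - x0)) \<partial>M)
        \<le> ennreal (2 * N (x0 - p) + s n)"
      unfolding s_def Fix_def
      by (intro nn_integral_halpern_le[OF norm nonexp _ beta prob U_normint sigma_def]) simp
    also have "\<dots> \<le> ennreal (2 * N (x0 - p) + S)"
      using s_n_le_S by (intro ennreal_leI) simp
    finally show "(\<integral>\<^sup>+ \<omega>. ennreal (N (T (halpern_iter T \<beta> U x0 n \<omega>) - x0)) \<partial>M)
        \<le> ennreal (2 * N (x0 - p) + S)" .
  qed
qed

theorem lemma1: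
  fixes N :: "real ^ 'd \<Rightarrow> real"
    and T :: "real ^ 'd \<Rightarrow> real ^ 'd"
    and \<beta> :: "nat \<Rightarrow> real"
    and M :: "'s measure"
    and U :: "nat \<Rightarrow> 's \<Rightarrow> real ^ 'd"
    and x0 :: "real ^ 'd"
    and \<sigma> :: "nat \<Rightarrow> real"
  assumes norm: "is_norm N"
    and nonexp: "nonexpansive_wrt N T"
    and fix_ne: "Fix T \<noteq> {}"
    and beta_range: "\<forall>n\<ge>1. 0 < \<beta> n \<and> \<beta> n < 1"
    and beta_mono: "\<forall>n\<ge>1. \<beta> n \<le> \<beta> (Suc n)"
    and beta_lim: "\<beta> \<longlonglongrightarrow> 1"
    and prob: "prob_space M"
    and U_meas: "\<forall>n\<ge>1. U n \<in> borel_measurable M"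
    and U_int: "\<forall>n\<ge>1. integrable M (U n)"
    and U_mean: "\<forall>n\<ge>1. prob_space.expectation M (U n) = 0"
    and U_normint: "\<forall>n\<ge>1. integrable M (\<lambda>\<omega>. N (U n \<omega>))"
    and sigma_def: "\<forall>n\<ge>1. \<sigma> n = prob_space.expectation M (\<lambda>\<omega>. N (U n \<omega>))"
  shows
    "(\<forall>C>0. (\<forall>x. N (T x) \<le> C) \<longrightarrow>
        (SUP n. \<integral>\<^sup>+ \<omega>. ennreal (N (T (halpern_iter T \<beta> U x0 n \<omega>) - x0)) \<partial>M)
          \<le> ennreal (C + N x0))
     \<and> (bdd_above ((\<lambda>n. \<Sum>i=1..n. Bprod \<beta> i n * \<sigma> i) ` {1..}) \<longrightarrow>
        (SUP n. \<integral>\<^sup>+ \<omega>. ennreal (N (T (halpern_iter T \<beta> U x0 n \<omega>) - x0)) \<partial>M)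
          \<le> ennreal (2 * distN N x0 (Fix T)
                     + (SUP n\<in>{1..}. \<Sum>i=1..n. Bprod \<beta> i n * \<sigma> i)))
     \<and> (summable (\<lambda>n. \<sigma> (Suc n)) \<longrightarrow>
        (SUP n. \<integral>\<^sup>+ \<omega>. ennreal (N (T (halpern_iter T \<beta> U x0 n \<omega>) - x0)) \<partial>M) < \<infinity>)"
proof -
  have beta: "\<forall>n\<ge>1. 0 \<le> \<beta> n \<and> \<beta> n \<le> 1"
    using beta_range by (auto simp: less_imp_le)
  have sigma_nonneg: "\<forall>i\<ge>1. 0 \<le> \<sigma> i"
    using sigma_def is_norm_nonneg[OF norm] by (simp add: integral_nonneg_AE)
  have part_i: "\<forall>C>0. (\<forall>x. N (T x) \<le> C) \<longrightarrow>
      (SUP n. \<integral>\<^sup>+ \<omega>. ennreal (N (T (halpern_iter T \<beta> U x0 n \<omega>) - x0)) \<partial>M) \<le> ennreal (C + N x0)"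
    by (simp add: SUP_nn_integral_halpern_le_bound[OF norm prob])
  have part_ii: "bdd_above ((\<lambda>n. \<Sum>i=1..n. Bprod \<beta> i n * \<sigma> i) ` {1..}) \<longrightarrow>
      (SUP n. \<integral>\<^sup>+ \<omega>. ennreal (N (T (halpern_iter T \<beta> U x0 n \<omega>) - x0)) \<partial>M)
        \<le> ennreal (2 * distN N x0 (Fix T) + (SUP n\<in>{1..}. \<Sum>i=1..n. Bprod \<beta> i n * \<sigma> i))"
    using SUP_nn_integral_halpern_le_distN[OF norm nonexp fix_ne beta prob U_normint sigma_def] by blast
  have "summable (\<lambda>n. \<sigma> (Suc n)) \<longrightarrow> bdd_above ((\<lambda>n. \<Sum>i=1..n. Bprod \<beta> i n * \<sigma> i) ` {1..})"
    using Bprod_weighted_sum_le_suminf[OF beta sigma_nonneg] by (meson bdd_aboveI2)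
  then have part_iii: "summable (\<lambda>n. \<sigma> (Suc n)) \<longrightarrow>
      (SUP n. \<integral>\<^sup>+ \<omega>. ennreal (N (T (halpern_iter T \<beta> U x0 n \<omega>) - x0)) \<partial>M) < \<infinity>"
    using part_ii by (auto simp: le_less_trans)
  show ?thesis
    using part_i part_ii part_iii by blast
qed

end
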